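(* If $\pi_0(\theta^* )>0$, then with $d_{k-1}:=D_{\mathrm{KL}}\big(q(\cdot;\theta^*,x_{k-1},u_{k-1})\,\|\,\hat q_k(\cdot;x_{k-1},u_{k-1})\big)$ one has $$\mathbb{E}\Big[\sum_{k=1}^{\infty}d_{k-1}\Big]=\sum_{k=1}^{\infty}\mathbb{E}[d_{k-1}]\le-\log\pi_0(\theta^* )<\infty,$$ and consequently $d_k\to0$ with probability 1.
   Context: System: $x_{k+1}=f(x_k,u_k,w_k,\theta)$, $w_k$ i.i.d. with a density; $\Theta=\{\theta_1,\theta_2,\dots\}$ countably infinite; data generated by the true parameter $\theta^*$; each $u_k$ is a measurable function of past observations $(x_0,\dots,x_k,u_0,\dots,u_{k-1})$. $q(x';\theta,x,u)$ is the (strictly positive, continuously differentiable, bounded-derivative) transition density. Posterior recursion $\pi_k(\theta)=q(x_k;\theta,x_{k-1},u_{k-1})\pi_{k-1}(\theta)/\sum_{\theta'}q(x_k;\theta',x_{k-1},u_{k-1})\pi_{k-1}(\theta')$ from prior $\pi_0$, and $\hat q_k(x';x,u):=\sum_{\theta}\pi_{k-1}(\theta)q(x';\theta,x,u)$. $D_{\mathrm{KL}}$ denotes Kullback–Leibler divergence. *)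

theory Defs
  imports "HOL-Probability.Probability"
begin

text \<open>Kullback--Leibler divergence D(P || Q) of two probability measures, in nats.
  The library's KL_divergence b M N is D(N || M), hence the argument swap.\<close>
definition DKL :: "'a measure \<Rightarrow> 'a measure \<Rightarrow> real" where
  "DKL P Q = KL_divergence (exp 1) Q P"

text \<open>Posterior recursion. Transition density convention: q th x u x' = q(x'; th, x, u).
  xs i = x_i, us i = u_i.  posterior ... k = pi_k.\<close>
fun posterior ::
  "'p set \<Rightarrow> ('p \<Rightarrow> real) \<Rightarrow> ('p \<Rightarrow> 'x \<Rightarrow> 'u \<Rightarrow> 'x \<Rightarrow> real)
   \<Rightarrow> (nat \<Rightarrow> 'x) \<Rightarrow> (nat \<Rightarrow> 'u) \<Rightarrow> nat \<Rightarrow> 'p \<Rightarrow> real" where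
  "posterior Theta pi0 q xs us 0 = pi0"
| "posterior Theta pi0 q xs us (Suc k) =
     (\<lambda>th. q th (xs k) (us k) (xs (Suc k)) * posterior Theta pi0 q xs us k th /
        (\<Sum>\<^sub>\<infinity>th'\<in>Theta. q th' (xs k) (us k) (xs (Suc k)) * posterior Theta pi0 q xs us k th'))"

definition qhat ::
  "'p set \<Rightarrow> ('p \<Rightarrow> real) \<Rightarrow> ('p \<Rightarrow> 'x \<Rightarrow> 'u \<Rightarrow> 'x \<Rightarrow> real)
   \<Rightarrow> (nat \<Rightarrow> 'x) \<Rightarrow> (nat \<Rightarrow> 'u) \<Rightarrow> nat \<Rightarrow> 'x \<Rightarrow> 'u \<Rightarrow> 'x \<Rightarrow> real" where
  "qhat Theta pi0 q xs us k x u x' =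
     (\<Sum>\<^sub>\<infinity>th\<in>Theta. posterior Theta pi0 q xs us (k - 1) th * q th x u x')"

end

theory Submission
  imports Defs
begin

(* Let r_k = q(x_{k+1}; thstar, x_k, u_k) / qhat_{k+1}(x_{k+1}; x_k, u_k) be the likelihood ratio
   of the true parameter against the Bayesian predictive at the observed next state. Bayes' rule
   telescopes to pi_n(thstar) = pi_0(thstar) * prod_{k<n} r_k, and pi_n(thstar) <= 1 gives
   sum_{k<n} ln r_k <= - ln pi_0(thstar) on every path. Split ln r = h(r) + 1 - 1/r with
   h(r) = ln r + 1/r - 1 >= 0. Given the past (a measurable function of x_0 and w_0, ..., w_{k-1},
   of which w_k is independent), h(r_k) has expectation d_k and 1/r_k has expectation at most 1,
   because qhat_{k+1} has total mass at most 1. Hence sum_{k<n} E d_k <= - ln pi_0(thstar), an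
   estimate between nonnegative quantities that needs no integrability of ln r_k. The sum of the
   d_k then has finite expectation, so it is finite almost surely and d_k -> 0. *)

section \<open>Nonnegative series along an enumeration\<close>

lemma suminf_ennreal_reindex_neq_top_iff:
  fixes g :: "'a \<Rightarrow> real"
  assumes e: "bij_betw e UNIV T" and nonneg: "\<And>t. t \<in> T \<Longrightarrow> 0 \<le> g t"
  shows "(\<Sum>n. ennreal (g (e n))) \<noteq> \<top> \<longleftrightarrow> g summable_on T"
proof -
  have nonneg': "\<And>n. 0 \<le> g (e n)" using nonneg bij_betw_apply[OF e] by blast
  have "g summable_on T \<longleftrightarrow> (\<lambda>n. g (e n)) summable_on UNIV"
    by (rule summable_on_reindex_bij_betw[OF e, symmetric])
  also have "\<dots> \<longleftrightarrow> summable (\<lambda>n. g (e n))"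
    by (rule summable_on_UNIV_nonneg_real_iff[OF nonneg'])
  also have "\<dots> \<longleftrightarrow> (\<Sum>n. ennreal (g (e n))) \<noteq> \<top>"
    using summable_suminf_not_top[of "\<lambda>n. g (e n)"] ennreal_suminf_neq_top[of "\<lambda>n. g (e n)"]
      nonneg' by blast
  finally show ?thesis ..
qed

lemma suminf_ennreal_reindex_eq:
  fixes g :: "'a \<Rightarrow> real"
  assumes e: "bij_betw e UNIV T" and nonneg: "\<And>t. t \<in> T \<Longrightarrow> 0 \<le> g t"
    and has_sum: "(g has_sum s) T"
  shows "(\<Sum>n. ennreal (g (e n))) = ennreal s"
proof -
  have "((\<lambda>n. g (e n)) has_sum s) UNIV"
    using has_sum_reindex_bij_betw[OF e] has_sum by blast
  then have "(\<lambda>n. g (e n)) sums s" by (rule has_sum_imp_sums)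
  with nonneg bij_betw_apply[OF e] show ?thesis by (intro suminf_ennreal_eq) auto
qed

lemma infsum_eq_enn2real_suminf_reindex:
  fixes g :: "'a \<Rightarrow> real"
  assumes e: "bij_betw e UNIV T" and nonneg: "\<And>t. t \<in> T \<Longrightarrow> 0 \<le> g t"
  shows "infsum g T = enn2real (\<Sum>n. ennreal (g (e n)))"
proof (cases "g summable_on T")
  case True
  then show ?thesis
    using suminf_ennreal_reindex_eq[OF e nonneg has_sum_infsum[OF True]]
      infsum_nonneg[of T g] nonneg
    by simp
next
  case False
  then have "(\<Sum>n. ennreal (g (e n))) = \<top>"
    using suminf_ennreal_reindex_neq_top_iff[of e T g] e nonneg by blast
  then show ?thesis using False by (simp add: infsum_not_exists)
qed

section \<open>KL divergence of densities\<close>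

text \<open>For densities p, s of total mass one, p * kl_gap (p / s) = p * ln (p / s) - p + s is a
  nonnegative integrand whose integral is the KL divergence.\<close>

definition kl_gap :: "real \<Rightarrow> real" where
  "kl_gap r = ln r + 1 / r - 1"

lemma kl_gap_nonneg: "0 < r \<Longrightarrow> 0 \<le> kl_gap r"
  using ln_le_minus_one[of "1 / r"] by (simp add: kl_gap_def ln_div)

lemma measurable_kl_gap[measurable]: "kl_gap \<in> borel_measurable borel"
  unfolding kl_gap_def by measurable

lemma integrable_kl_gap_integrand:
  fixes p s :: "'a \<Rightarrow> real"
  assumes [measurable]: "p \<in> borel_measurable M" "s \<in> borel_measurable M"
    and int_p: "integrable M p" and int_s: "integrable M s" and p_pos: "\<And>x. 0 < p x"
    and c: "0 < c" and s_ge: "AE x in M. c * p x \<le> s x"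
  shows "integrable M (\<lambda>x. p x * kl_gap (p x / s x))"
proof (rule Bochner_Integration.integrable_bound)
  show "integrable M (\<lambda>x. p x * \<bar>ln c\<bar> + s x)" using int_p int_s by simp
  show "AE x in M. norm (p x * kl_gap (p x / s x)) \<le> norm (p x * \<bar>ln c\<bar> + s x)"
    using s_ge
  proof eventually_elim
    case (elim x)
    have px: "0 < p x" by (rule p_pos)
    have sx: "0 < s x" using mult_pos_pos[OF c px] elim by linarith
    have "p x \<le> s x / c" using elim c by (simp add: le_divide_eq mult.commute)
    then have "p x / s x \<le> 1 / c" using sx by (simp add: divide_le_eq)
    then have "ln (p x / s x) \<le> ln (1 / c)" using px sx c by (subst ln_le_cancel_iff) auto
    also have "\<dots> \<le> \<bar>ln c\<bar>" using c by (simp add: ln_div)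
    finally have bound: "p x * ln (p x / s x) \<le> p x * \<bar>ln c\<bar>" using px by simp
    have eq: "p x * kl_gap (p x / s x) = p x * ln (p x / s x) + s x - p x"
      using px by (simp add: kl_gap_def distrib_left right_diff_distrib)
    have "norm (p x * kl_gap (p x / s x)) = p x * kl_gap (p x / s x)"
      using px sx kl_gap_nonneg[of "p x / s x"] by simp
    moreover have "norm (p x * \<bar>ln c\<bar> + s x) = p x * \<bar>ln c\<bar> + s x" using px sx by simp
    ultimately show ?case using eq bound px by linarith
  qed
  show "(\<lambda>x. p x * kl_gap (p x / s x)) \<in> borel_measurable M" by measurable
qed

lemma (in sigma_finite_measure) DKL_density_eq_nn_integral_kl_gap:
  fixes p s :: "'a \<Rightarrow> real"
  assumes p[measurable]: "p \<in> borel_measurable M" and p_pos: "\<And>x. 0 < p x"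
    and nn_int_p: "(\<integral>\<^sup>+x. ennreal (p x) \<partial>M) = 1"
    and s[measurable]: "s \<in> borel_measurable M" and nn_int_s: "(\<integral>\<^sup>+x. ennreal (s x) \<partial>M) = 1"
    and c: "0 < c" and s_ge: "AE x in M. c * p x \<le> s x"
  shows "ennreal (DKL (density M p) (density M s)) = (\<integral>\<^sup>+x. ennreal (p x * kl_gap (p x / s x)) \<partial>M)"
    and "0 \<le> DKL (density M p) (density M s)"
proof -
  have s_pos: "AE x in M. 0 < s x"
    using s_ge by eventually_elim (metis c p_pos mult_pos_pos less_le_trans)
  have int_p: "integrable M p" and p_1: "(\<integral>x. p x \<partial>M) = 1"
    using nn_int_p p_pos
    by (auto intro!: integrableI_nonneg simp: less_imp_le integral_eq_nn_integral)
  have "AE x in M. 0 \<le> s x" using s_pos by eventually_elim simp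
  then have int_s: "integrable M s" and s_1: "(\<integral>x. s x \<partial>M) = 1"
    using nn_int_s by (auto intro!: integrableI_nonneg simp: integral_eq_nn_integral)
  define G where "G = (\<lambda>x. p x * kl_gap (p x / s x))"
  have int_G: "integrable M G"
    unfolding G_def by (rule integrable_kl_gap_integrand[OF p s int_p int_s p_pos c s_ge])
  have G_nonneg: "AE x in M. 0 \<le> G x"
    using s_pos by eventually_elim (simp add: G_def kl_gap_nonneg p_pos less_imp_le)
  have "AE x in M. s x = 0 \<longrightarrow> p x = 0" using s_pos by eventually_elim simp
  then have "DKL (density M p) (density M s) = (\<integral>x. p x * log (exp 1) (p x / s x) \<partial>M)"
    unfolding DKL_def using s_pos p_pos
    by (intro KL_density_density) (auto simp: less_imp_le elim!: AE_mp)
  also have "\<dots> = (\<integral>x. p x * ln (p x / s x) \<partial>M)" by (simp add: log_def)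
  also have "\<dots> = (\<integral>x. G x - s x + p x \<partial>M)"
    using s_pos by (intro integral_cong_AE)
      (auto simp: G_def kl_gap_def p_pos less_imp_neq[OF p_pos, symmetric] distrib_left
        right_diff_distrib elim!: AE_mp)
  also have "\<dots> = integral\<^sup>L M G"
    using int_G int_s int_p p_1 s_1 by simp
  finally have DKL_eq: "DKL (density M p) (density M s) = integral\<^sup>L M G" .
  then show "ennreal (DKL (density M p) (density M s)) =
      (\<integral>\<^sup>+x. ennreal (p x * kl_gap (p x / s x)) \<partial>M)"
    using nn_integral_eq_integral[OF int_G G_nonneg] by (simp add: G_def)
  show "0 \<le> DKL (density M p) (density M s)"
    unfolding DKL_eq using G_nonneg by (rule integral_nonneg_AE)
qed

lemma nn_integral_enn2real_of_finite:
  fixes f :: "'a \<Rightarrow> ennreal"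
  assumes "f \<in> borel_measurable M" and "(\<integral>\<^sup>+x. f x \<partial>M) \<noteq> \<top>"
  shows "AE x in M. f x \<noteq> \<top>" and "(\<integral>\<^sup>+x. ennreal (enn2real (f x)) \<partial>M) = (\<integral>\<^sup>+x. f x \<partial>M)"
proof -
  show fin: "AE x in M. f x \<noteq> \<top>"
    using nn_integral_noteq_infinite[of f M] assms by simp
  show "(\<integral>\<^sup>+x. ennreal (enn2real (f x)) \<partial>M) = (\<integral>\<^sup>+x. f x \<partial>M)"
    using fin by (intro nn_integral_cong_AE) (auto simp: ennreal_enn2real_if elim!: AE_mp)
qed

section \<open>Products of a probability space\<close>

lemma (in prob_space) nn_integral_PiM_restrict:
  fixes K :: "(nat \<Rightarrow> 'a) \<Rightarrow> ennreal"
  assumes "finite J" and [measurable]: "K \<in> borel_measurable (PiM J (\<lambda>_. M))"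
  shows "(\<integral>\<^sup>+w. K (restrict w J) \<partial>PiM UNIV (\<lambda>_. M)) = (\<integral>\<^sup>+v. K v \<partial>PiM J (\<lambda>_. M))"
proof -
  interpret P: product_prob_space "\<lambda>_. M" UNIV by unfold_locales
  have "(\<integral>\<^sup>+w. K (restrict w J) \<partial>PiM UNIV (\<lambda>_. M)) =
      (\<integral>\<^sup>+v. K v \<partial>distr (PiM UNIV (\<lambda>_. M)) (PiM J (\<lambda>_. M)) (\<lambda>w. restrict w J))"
    by (rule nn_integral_distr[symmetric], rule measurable_restrict_subset) simp_all
  also have "\<dots> = (\<integral>\<^sup>+v. K v \<partial>PiM J (\<lambda>_. M))"
    using assms(1) by (subst P.distr_PiM_restrict_finite) auto
  finally show ?thesis .
qed

lemma (in prob_space) nn_integral_PiM_prefix_component: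
  fixes H :: "(nat \<Rightarrow> 'a) \<Rightarrow> 'a \<Rightarrow> ennreal"
  assumes H[measurable]: "(\<lambda>(v, y). H v y) \<in> borel_measurable (PiM {..<k} (\<lambda>_. M) \<Otimes>\<^sub>M M)"
  shows "(\<integral>\<^sup>+w. H (restrict w {..<k}) (w k) \<partial>PiM UNIV (\<lambda>_. M)) =
         (\<integral>\<^sup>+v. \<integral>\<^sup>+y. H v y \<partial>M \<partial>PiM {..<k} (\<lambda>_. M))"
proof -
  interpret P: product_prob_space "\<lambda>_. M" UNIV by unfold_locales
  define H' where "H' = (\<lambda>v. H (restrict v {..<k}) (v k))"
  have atMost_eq: "{..k} = insert k {..<k}" by auto
  have "(\<lambda>v. (restrict v {..<k}, v k)) \<in> PiM {..k} (\<lambda>_. M) \<rightarrow>\<^sub>M PiM {..<k} (\<lambda>_. M) \<Otimes>\<^sub>M M"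
    by (intro measurable_Pair measurable_restrict_subset measurable_component_singleton) auto
  from measurable_comp[OF this H] have H'[measurable]: "H' \<in> borel_measurable (PiM {..k} (\<lambda>_. M))"
    by (simp add: H'_def comp_def)
  have "(\<integral>\<^sup>+w. H (restrict w {..<k}) (w k) \<partial>PiM UNIV (\<lambda>_. M)) =
      (\<integral>\<^sup>+w. H' (restrict w {..k}) \<partial>PiM UNIV (\<lambda>_. M))"
    using atMost_eq by (simp add: H'_def Int_absorb1)
  also have "\<dots> = (\<integral>\<^sup>+v. H' v \<partial>PiM (insert k {..<k}) (\<lambda>_. M))"
    using nn_integral_PiM_restrict[OF _ H'] atMost_eq by simp
  also have "\<dots> = (\<integral>\<^sup>+v. \<integral>\<^sup>+y. H' (v(k := y)) \<partial>M \<partial>PiM {..<k} (\<lambda>_. M))"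
    by (rule P.product_nn_integral_insert) (use H' atMost_eq in auto)
  also have "\<dots> = (\<integral>\<^sup>+v. \<integral>\<^sup>+y. H v y \<partial>M \<partial>PiM {..<k} (\<lambda>_. M))"
  proof (intro nn_integral_cong)
    fix v y assume "v \<in> space (PiM {..<k} (\<lambda>_. M))"
    then have "restrict (v(k := y)) {..<k} = v"
      by (auto simp: space_PiM PiE_def extensional_def restrict_def)
    then show "H' (v(k := y)) = H v y" by (simp add: H'_def)
  qed
  finally show ?thesis .
qed

section \<open>The Bayesian posterior\<close>

declare posterior.simps(2)[simp del]

lemma posterior_cong:
  assumes "\<And>i. i \<le> k \<Longrightarrow> xs i = xs' i" and "\<And>i. i < k \<Longrightarrow> us i = us' i"
  shows "posterior Theta pi0 q xs us k = posterior Theta pi0 q xs' us' k"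
  using assms
proof (induction k)
  case 0
  then show ?case by simp
next
  case (Suc k)
  then have "posterior Theta pi0 q xs us k = posterior Theta pi0 q xs' us' k"
    "xs k = xs' k" "xs (Suc k) = xs' (Suc k)" "us k = us' k"
    by auto
  then show ?case by (simp only: posterior.simps(2))
qed

locale posterior_setting =
  fixes Theta :: "'p set" and pi0 :: "'p \<Rightarrow> real" and q :: "'p \<Rightarrow> 'x \<Rightarrow> 'u \<Rightarrow> 'x \<Rightarrow> real"
    and thstar :: 'p
  assumes prior_nonneg: "\<And>th. th \<in> Theta \<Longrightarrow> 0 \<le> pi0 th"
    and prior_has_sum: "(pi0 has_sum 1) Theta"
    and q_pos: "\<And>th x u x'. th \<in> Theta \<Longrightarrow> 0 < q th x u x'"
    and thstar_in: "thstar \<in> Theta"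
    and prior_thstar_pos: "0 < pi0 thstar"
begin

abbreviation post :: "(nat \<Rightarrow> 'x) \<Rightarrow> (nat \<Rightarrow> 'u) \<Rightarrow> nat \<Rightarrow> 'p \<Rightarrow> real" where
  "post xs us k \<equiv> posterior Theta pi0 q xs us k"

text \<open>The normaliser in Bayes' rule at step k is the predictive density of the observed next
  state.\<close>

abbreviation evidence :: "(nat \<Rightarrow> 'x) \<Rightarrow> (nat \<Rightarrow> 'u) \<Rightarrow> nat \<Rightarrow> real" where
  "evidence xs us k \<equiv> qhat Theta pi0 q xs us (Suc k) (xs k) (us k) (xs (Suc k))"

abbreviation evidence_summable :: "(nat \<Rightarrow> 'x) \<Rightarrow> (nat \<Rightarrow> 'u) \<Rightarrow> nat \<Rightarrow> bool" where
  "evidence_summable xs us k \<equiv>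
     (\<lambda>th. post xs us k th * q th (xs k) (us k) (xs (Suc k))) summable_on Theta"

lemma posterior_Suc:
  "post xs us (Suc k) th = q th (xs k) (us k) (xs (Suc k)) * post xs us k th / evidence xs us k"
  by (simp add: posterior.simps(2) qhat_def mult.commute)

lemma posterior_nonneg: "th \<in> Theta \<Longrightarrow> 0 \<le> post xs us k th"
proof (induction k arbitrary: th)
  case 0
  then show ?case using prior_nonneg by simp
next
  case (Suc k)
  have "0 \<le> evidence xs us k"
    unfolding qhat_def using Suc.IH q_pos by (simp add: infsum_nonneg less_imp_le)
  then show ?case using Suc q_pos[of th] by (simp add: posterior_Suc less_imp_le)
qed

lemma posterior_has_sum_1_or_0:
  "(post xs us k has_sum 1) Theta \<or> (\<forall>th\<in>Theta. post xs us k th = 0)"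
proof (cases k)
  case 0
  then show ?thesis using prior_has_sum by simp
next
  case (Suc j)
  let ?g = "\<lambda>th. post xs us j th * q th (xs j) (us j) (xs (Suc j))"
  show ?thesis
  proof (cases "evidence xs us j = 0")
    case True
    then show ?thesis using Suc by (simp add: posterior_Suc)
  next
    case False
    then have "?g summable_on Theta"
      by (auto simp: qhat_def dest: infsum_not_exists)
    then have "(?g has_sum evidence xs us j) Theta"
      unfolding qhat_def by (simp add: has_sum_infsum)
    from has_sum_divide_const[OF this, of "evidence xs us j"]
    have "((\<lambda>th. ?g th / evidence xs us j) has_sum 1) Theta" using False by simp
    moreover have "post xs us (Suc j) = (\<lambda>th. ?g th / evidence xs us j)"
      by (rule ext) (simp add: posterior_Suc mult.commute)
    ultimately show ?thesis using Suc by simp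
  qed
qed

lemma evidence_pos:
  assumes "evidence_summable xs us k" and "0 < post xs us k thstar"
  shows "0 < evidence xs us k"
proof -
  let ?g = "\<lambda>th. post xs us k th * q th (xs k) (us k) (xs (Suc k))"
  have "(?g has_sum evidence xs us k) Theta"
    using assms(1) unfolding qhat_def by (simp add: has_sum_infsum)
  then have "?g thstar \<le> evidence xs us k"
    using finite_sum_le_has_sum[of ?g Theta _ "{thstar}"] thstar_in q_pos posterior_nonneg
    by (simp add: less_imp_le)
  moreover have "0 < ?g thstar" using assms(2) q_pos thstar_in by simp
  ultimately show ?thesis by linarith
qed

lemma posterior_thstar_pos:
  assumes "\<forall>j<k. evidence_summable xs us j"
  shows "0 < post xs us k thstar"
  using assms
proof (induction k)
  case 0
  then show ?case using prior_thstar_pos by simp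
next
  case (Suc k)
  then have "0 < post xs us k thstar" "0 < evidence xs us k"
    using evidence_pos by auto
  then show ?case using q_pos thstar_in by (simp add: posterior_Suc)
qed

lemma posterior_has_sum_1:
  assumes "\<forall>j<k. evidence_summable xs us j"
  shows "(post xs us k has_sum 1) Theta"
  using posterior_has_sum_1_or_0[of xs us k] posterior_thstar_pos[OF assms] thstar_in by force

lemma posterior_thstar_le_1:
  assumes "\<forall>j<k. evidence_summable xs us j"
  shows "post xs us k thstar \<le> 1"
  using finite_sum_le_has_sum[OF posterior_has_sum_1[OF assms], of "{thstar}"]
    thstar_in posterior_nonneg by simp

lemma ln_posterior_thstar:
  assumes "\<forall>j<n. evidence_summable xs us j"
  shows "ln (post xs us n thstar) =
    ln (pi0 thstar) + (\<Sum>k<n. ln (q thstar (xs k) (us k) (xs (Suc k)) / evidence xs us k))"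
  using assms
proof (induction n)
  case 0
  then show ?case by simp
next
  case (Suc n)
  then have pos: "0 < post xs us n thstar" "0 < evidence xs us n"
    using posterior_thstar_pos evidence_pos by auto
  have "ln (post xs us (Suc n) thstar) =
      ln (q thstar (xs n) (us n) (xs (Suc n)) / evidence xs us n) + ln (post xs us n thstar)"
    using pos q_pos[OF thstar_in] by (simp add: posterior_Suc ln_mult_pos[symmetric])
  then show ?case using Suc by simp
qed

lemma sum_ln_likelihood_ratio_le:
  assumes "\<forall>j<n. evidence_summable xs us j"
  shows "(\<Sum>k<n. ln (q thstar (xs k) (us k) (xs (Suc k)) / evidence xs us k)) \<le> - ln (pi0 thstar)"
proof -
  have "ln (post xs us n thstar) \<le> 0"
    using posterior_thstar_pos[OF assms] posterior_thstar_le_1[OF assms] by simp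
  then show ?thesis using ln_posterior_thstar[OF assms] by linarith
qed

lemma sum_kl_gap_le:
  assumes "\<forall>j<n. evidence_summable xs us j"
  shows "(\<Sum>k<n. kl_gap (q thstar (xs k) (us k) (xs (Suc k)) / evidence xs us k)) + n
    \<le> - ln (pi0 thstar) + (\<Sum>k<n. evidence xs us k / q thstar (xs k) (us k) (xs (Suc k)))"
proof -
  have "(\<Sum>k<n. kl_gap (q thstar (xs k) (us k) (xs (Suc k)) / evidence xs us k)) + n =
      (\<Sum>k<n. ln (q thstar (xs k) (us k) (xs (Suc k)) / evidence xs us k))
      + (\<Sum>k<n. evidence xs us k / q thstar (xs k) (us k) (xs (Suc k)))"
    by (simp add: kl_gap_def sum.distrib sum_subtractf)
  then show ?thesis using sum_ln_likelihood_ratio_le[OF assms] by linarith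
qed

end

section \<open>The closed loop\<close>

text \<open>Only the entries with index at most k of closed_loop F mu k x0 w are meaningful; the
  others are junk.\<close>

fun closed_loop :: "('x \<Rightarrow> 'u \<Rightarrow> 'w \<Rightarrow> 'x) \<Rightarrow> (nat \<Rightarrow> (nat \<Rightarrow> 'x) \<times> (nat \<Rightarrow> 'u) \<Rightarrow> 'u)
    \<Rightarrow> nat \<Rightarrow> 'x \<Rightarrow> (nat \<Rightarrow> 'w) \<Rightarrow> (nat \<Rightarrow> 'x) \<times> (nat \<Rightarrow> 'u)" where
  "closed_loop F mu 0 x0 w =
     ((\<lambda>_. x0), (\<lambda>_. mu 0 (restrict (\<lambda>_. x0) {..0}, restrict (\<lambda>_. undefined) {..<0})))"
| "closed_loop F mu (Suc k) x0 w =
     (let xs = fst (closed_loop F mu k x0 w); us = snd (closed_loop F mu k x0 w);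
          xs' = xs(Suc k := F (xs k) (us k) (w k))
      in (xs', us(Suc k := mu (Suc k) (restrict xs' {..Suc k}, restrict us {..<Suc k}))))"

lemma closed_loop_cong:
  "(\<And>j. j < k \<Longrightarrow> w j = w' j) \<Longrightarrow> closed_loop F mu k x0 w = closed_loop F mu k x0 w'"
  by (induction k) (auto simp: Let_def)

lemma closed_loop_Suc_le:
  "i \<le> k \<Longrightarrow> fst (closed_loop F mu (Suc k) x0 w) i = fst (closed_loop F mu k x0 w) i"
  "i \<le> k \<Longrightarrow> snd (closed_loop F mu (Suc k) x0 w) i = snd (closed_loop F mu k x0 w) i"
  by (simp_all add: Let_def)

lemma closed_loop_Suc_fst: "fst (closed_loop F mu (Suc k) x0 w) (Suc k) =
    F (fst (closed_loop F mu k x0 w) k) (snd (closed_loop F mu k x0 w) k) (w k)"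
  by (simp add: Let_def)

lemma closed_loop_Suc_snd: "snd (closed_loop F mu (Suc k) x0 w) (Suc k) =
    mu (Suc k) (restrict (fst (closed_loop F mu (Suc k) x0 w)) {..Suc k},
                restrict (snd (closed_loop F mu k x0 w)) {..<Suc k})"
  by (simp add: Let_def)

declare closed_loop.simps(2)[simp del]

lemma measurable_component_UNIV:
  assumes "space N = UNIV"
  shows "(\<lambda>w. w k) \<in> PiM I (\<lambda>_. N) \<rightarrow>\<^sub>M N"
proof (cases "k \<in> I")
  case True
  then show ?thesis by (rule measurable_component_singleton)
next
  case False
  have "(\<lambda>w. undefined) \<in> PiM I (\<lambda>_. N) \<rightarrow>\<^sub>M N" using assms by simp
  then show ?thesis
    by (rule measurable_cong[THEN iffD1, rotated])
      (use False in \<open>auto simp: space_PiM PiE_def extensional_def\<close>)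
qed

lemma measurable_closed_loop:
  fixes F :: "'x::topological_space \<Rightarrow> 'u \<Rightarrow> 'w \<Rightarrow> 'x"
  assumes F: "(\<lambda>(x, u, w). F x u w) \<in> borel \<Otimes>\<^sub>M Um \<Otimes>\<^sub>M Wm \<rightarrow>\<^sub>M borel"
    and mu: "\<And>k. mu k \<in> PiM {..k} (\<lambda>_. borel) \<Otimes>\<^sub>M PiM {..<k} (\<lambda>_. Um) \<rightarrow>\<^sub>M Um"
    and space_Wm: "space Wm = UNIV" and "i \<le> k"
  shows "(\<lambda>z. fst (closed_loop F mu k (fst z) (snd z)) i) \<in> borel \<Otimes>\<^sub>M PiM I (\<lambda>_. Wm) \<rightarrow>\<^sub>M borel
       \<and> (\<lambda>z. snd (closed_loop F mu k (fst z) (snd z)) i) \<in> borel \<Otimes>\<^sub>M PiM I (\<lambda>_. Wm) \<rightarrow>\<^sub>M Um"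
  using \<open>i \<le> k\<close>
proof (induction k arbitrary: i)
  case 0
  have "(\<lambda>z. (restrict (\<lambda>_. fst z) {..0}, restrict (\<lambda>_. undefined) {..<0::nat})) \<in>
      borel \<Otimes>\<^sub>M PiM I (\<lambda>_. Wm) \<rightarrow>\<^sub>M PiM {..0} (\<lambda>_. borel) \<Otimes>\<^sub>M PiM {..<0} (\<lambda>_. Um)"
    by measurable
  from measurable_comp[OF this mu] show ?case by (simp add: comp_def)
next
  case (Suc k)
  let ?N = "borel \<Otimes>\<^sub>M PiM I (\<lambda>_. Wm)"
  let ?x = "\<lambda>k i z. fst (closed_loop F mu k (fst z) (snd z)) i"
  let ?u = "\<lambda>k i z. snd (closed_loop F mu k (fst z) (snd z)) i"
  have "(\<lambda>z. snd z k) \<in> ?N \<rightarrow>\<^sub>M Wm"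
    using measurable_comp[OF measurable_snd measurable_component_UNIV[OF space_Wm]]
    by (simp add: comp_def)
  then have "(\<lambda>z. (?x k k z, ?u k k z, snd z k)) \<in> ?N \<rightarrow>\<^sub>M borel \<Otimes>\<^sub>M Um \<Otimes>\<^sub>M Wm"
    using Suc.IH by (intro measurable_Pair) auto
  from measurable_comp[OF this F] have new_x: "?x (Suc k) (Suc k) \<in> ?N \<rightarrow>\<^sub>M borel"
    by (simp add: comp_def closed_loop_Suc_fst)
  have x: "?x (Suc k) j \<in> ?N \<rightarrow>\<^sub>M borel" if "j \<le> Suc k" for j
    using that new_x Suc.IH by (cases "j = Suc k") (auto simp: closed_loop_Suc_le)
  have "(\<lambda>z. (restrict (\<lambda>j. ?x (Suc k) j z) {..Suc k}, restrict (\<lambda>j. ?u k j z) {..<Suc k})) \<in>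
      ?N \<rightarrow>\<^sub>M PiM {..Suc k} (\<lambda>_. borel) \<Otimes>\<^sub>M PiM {..<Suc k} (\<lambda>_. Um)"
    using x Suc.IH by (intro measurable_Pair measurable_restrict) auto
  from measurable_comp[OF this mu] have new_u: "?u (Suc k) (Suc k) \<in> ?N \<rightarrow>\<^sub>M Um"
    by (simp add: comp_def closed_loop_Suc_snd)
  have "?u (Suc k) i \<in> ?N \<rightarrow>\<^sub>M Um"
    using Suc new_u by (cases "i = Suc k") (auto simp: closed_loop_Suc_le)
  then show ?case using x Suc.prems by blast
qed

section \<open>Expected KL divergence along the closed loop\<close>

locale closed_loop_bayes = posterior_setting Theta pi0 q thstar
  for Theta :: "'p set" and pi0 :: "'p \<Rightarrow> real"
    and q :: "'p \<Rightarrow> 'x::euclidean_space \<Rightarrow> 'u \<Rightarrow> 'x \<Rightarrow> real" and thstar :: 'p +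
  fixes M :: "'o measure" and Um :: "'u measure" and Wm :: "'w measure"
    and f :: "'x \<Rightarrow> 'u \<Rightarrow> 'w \<Rightarrow> 'p \<Rightarrow> 'x"
    and X :: "nat \<Rightarrow> 'o \<Rightarrow> 'x" and U :: "nat \<Rightarrow> 'o \<Rightarrow> 'u" and W :: "nat \<Rightarrow> 'o \<Rightarrow> 'w"
    and mu :: "nat \<Rightarrow> (nat \<Rightarrow> 'x) \<times> (nat \<Rightarrow> 'u) \<Rightarrow> 'u"
  assumes prob_M: "prob_space M"
    and Theta_countable: "countable Theta" and Theta_infinite: "infinite Theta"
    and prob_Wm: "prob_space Wm" and space_Wm: "space Wm = UNIV"
    and f_meas: "\<And>th. th \<in> Theta \<Longrightarrow> (\<lambda>(x, u, w). f x u w th) \<in> borel \<Otimes>\<^sub>M Um \<Otimes>\<^sub>M Wm \<rightarrow>\<^sub>M borel"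
    and W_meas: "\<And>k. W k \<in> M \<rightarrow>\<^sub>M Wm"
    and X0_meas: "X 0 \<in> borel_measurable M"
    and noise_iid: "distr M (borel \<Otimes>\<^sub>M PiM UNIV (\<lambda>_. Wm)) (\<lambda>\<omega>. (X 0 \<omega>, \<lambda>k. W k \<omega>))
      = distr M borel (X 0) \<Otimes>\<^sub>M PiM UNIV (\<lambda>_. Wm)"
    and q_density: "\<And>th x u. th \<in> Theta \<Longrightarrow>
      distr Wm borel (\<lambda>w. f x u w th) = density lborel (q th x u)"
    and q_meas: "\<And>th. th \<in> Theta \<Longrightarrow>
      (\<lambda>(x, u, x'). q th x u x') \<in> borel_measurable (borel \<Otimes>\<^sub>M Um \<Otimes>\<^sub>M borel)"
    and mu_meas: "\<And>k. mu k \<in> PiM {..k} (\<lambda>_. borel) \<Otimes>\<^sub>M PiM {..<k} (\<lambda>_. Um) \<rightarrow>\<^sub>M Um"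
    and U_feedback: "\<And>k \<omega>. U k \<omega> = mu k (restrict (\<lambda>i. X i \<omega>) {..k}, restrict (\<lambda>i. U i \<omega>) {..<k})"
    and X_Suc: "\<And>k \<omega>. X (Suc k) \<omega> = f (X k \<omega>) (U k \<omega>) (W k \<omega>) thstar"
begin

sublocale M: prob_space M by (rule prob_M)

sublocale Wm: prob_space Wm by (rule prob_Wm)

declare W_meas[measurable] X0_meas[measurable]

abbreviation f_true :: "'x \<Rightarrow> 'u \<Rightarrow> 'w \<Rightarrow> 'x" where
  "f_true x u w \<equiv> f x u w thstar"

text \<open>Everything up to time k is a measurable function of the inputs
  z = (x_0, (w_0, ..., w_{k-1})).\<close>

definition inputs :: "nat \<Rightarrow> 'o \<Rightarrow> 'x \<times> (nat \<Rightarrow> 'w)" where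
  "inputs k \<omega> = (X 0 \<omega>, restrict (\<lambda>j. W j \<omega>) {..<k})"

definition state_at :: "nat \<Rightarrow> 'x \<times> (nat \<Rightarrow> 'w) \<Rightarrow> 'x" where
  "state_at i z = fst (closed_loop f_true mu i (fst z) (snd z)) i"

definition control_at :: "nat \<Rightarrow> 'x \<times> (nat \<Rightarrow> 'w) \<Rightarrow> 'u" where
  "control_at i z = snd (closed_loop f_true mu i (fst z) (snd z)) i"

lemma closed_loop_eq_X_U:
  "i \<le> k \<Longrightarrow> fst (closed_loop f_true mu k (X 0 \<omega>) (\<lambda>j. W j \<omega>)) i = X i \<omega> \<and>
    snd (closed_loop f_true mu k (X 0 \<omega>) (\<lambda>j. W j \<omega>)) i = U i \<omega>"
proof (induction k arbitrary: i)
  case 0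
  have "restrict (\<lambda>_. X 0 \<omega>) {..0} = restrict (\<lambda>i. X i \<omega>) {..0::nat}"
    "restrict (\<lambda>_. undefined) {..<0} = restrict (\<lambda>i. U i \<omega>) {..<0::nat}"
    by (auto simp: restrict_def)
  then show ?case using 0 U_feedback[of 0 \<omega>] by simp
next
  case (Suc k)
  let ?c = "closed_loop f_true mu (Suc k) (X 0 \<omega>) (\<lambda>j. W j \<omega>)"
  have old: "fst ?c i = X i \<omega> \<and> snd ?c i = U i \<omega>" if "i \<le> k" for i
    using Suc.IH that by (simp add: closed_loop_Suc_le)
  have x: "fst ?c i = X i \<omega>" if "i \<le> Suc k" for i
    using that old Suc.IH[of k] X_Suc by (cases "i = Suc k") (auto simp: closed_loop_Suc_fst)
  have "restrict (fst ?c) {..Suc k} = restrict (\<lambda>i. X i \<omega>) {..Suc k}"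
    "restrict (snd (closed_loop f_true mu k (X 0 \<omega>) (\<lambda>j. W j \<omega>))) {..<Suc k} =
       restrict (\<lambda>i. U i \<omega>) {..<Suc k}"
    using x Suc.IH by (auto simp: restrict_def)
  then have "snd ?c (Suc k) = U (Suc k) \<omega>"
    using U_feedback[of "Suc k" \<omega>] by (simp add: closed_loop_Suc_snd)
  then show ?case using Suc.prems old x by (cases "i = Suc k") auto
qed

lemma X_eq_state_at: "i \<le> k \<Longrightarrow> X i \<omega> = state_at i (inputs k \<omega>)"
  and U_eq_control_at: "i \<le> k \<Longrightarrow> U i \<omega> = control_at i (inputs k \<omega>)"
proof -
  assume "i \<le> k"
  then have "closed_loop f_true mu i (X 0 \<omega>) (restrict (\<lambda>j. W j \<omega>) {..<k}) =
      closed_loop f_true mu i (X 0 \<omega>) (\<lambda>j. W j \<omega>)"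
    by (intro closed_loop_cong) auto
  then show "X i \<omega> = state_at i (inputs k \<omega>)" and "U i \<omega> = control_at i (inputs k \<omega>)"
    using closed_loop_eq_X_U[of i i \<omega>] by (simp_all add: state_at_def control_at_def inputs_def)
qed

lemma f_true_meas: "(\<lambda>(x, u, w). f_true x u w) \<in> borel \<Otimes>\<^sub>M Um \<Otimes>\<^sub>M Wm \<rightarrow>\<^sub>M borel"
  using f_meas thstar_in by blast

lemma measurable_state_at[measurable]: "state_at i \<in> borel_measurable (borel \<Otimes>\<^sub>M PiM I (\<lambda>_. Wm))"
  and measurable_control_at[measurable]: "control_at i \<in> borel \<Otimes>\<^sub>M PiM I (\<lambda>_. Wm) \<rightarrow>\<^sub>M Um"
  using measurable_closed_loop[OF f_true_meas mu_meas space_Wm, of i i I]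
  unfolding state_at_def control_at_def by auto

lemma measurable_initial_noise[measurable]:
  "(\<lambda>\<omega>. (X 0 \<omega>, \<lambda>k. W k \<omega>)) \<in> M \<rightarrow>\<^sub>M borel \<Otimes>\<^sub>M PiM UNIV (\<lambda>_. Wm)"
proof -
  have "(\<lambda>\<omega> k. W k \<omega>) \<in> M \<rightarrow>\<^sub>M PiM UNIV (\<lambda>_. Wm)"
    by (rule measurable_PiM_single') (auto simp: space_Wm)
  then show ?thesis by (intro measurable_Pair) simp_all
qed

lemma measurable_inputs[measurable]: "inputs k \<in> M \<rightarrow>\<^sub>M borel \<Otimes>\<^sub>M PiM {..<k} (\<lambda>_. Wm)"
  unfolding inputs_def by (intro measurable_Pair measurable_restrict) simp_all

lemma measurable_X[measurable]: "X i \<in> borel_measurable M"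
proof -
  have "X i = (\<lambda>\<omega>. state_at i (inputs i \<omega>))" using X_eq_state_at[of i i] by auto
  then show ?thesis by simp
qed

lemma measurable_U[measurable]: "U i \<in> M \<rightarrow>\<^sub>M Um"
proof -
  have "U i = (\<lambda>\<omega>. control_at i (inputs i \<omega>))" using U_eq_control_at[of i i] by auto
  then show ?thesis by simp
qed

lemma nn_integral_initial_noise:
  assumes "H \<in> borel_measurable (borel \<Otimes>\<^sub>M PiM UNIV (\<lambda>_. Wm))"
  shows "(\<integral>\<^sup>+\<omega>. H (X 0 \<omega>, \<lambda>j. W j \<omega>) \<partial>M) =
     (\<integral>\<^sup>+x0. \<integral>\<^sup>+w. H (x0, w) \<partial>PiM UNIV (\<lambda>_. Wm) \<partial>distr M borel (X 0))"
proof -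
  interpret P: prob_space "PiM UNIV (\<lambda>_. Wm)" by (rule prob_space_PiM) (rule prob_Wm)
  have sets_eq: "sets (distr M borel (X 0) \<Otimes>\<^sub>M PiM UNIV (\<lambda>_. Wm)) =
      sets (borel \<Otimes>\<^sub>M PiM UNIV (\<lambda>_. Wm))"
    by (intro sets_pair_measure_cong) auto
  have "(\<integral>\<^sup>+\<omega>. H (X 0 \<omega>, \<lambda>j. W j \<omega>) \<partial>M) =
      (\<integral>\<^sup>+t. H t \<partial>distr M (borel \<Otimes>\<^sub>M PiM UNIV (\<lambda>_. Wm)) (\<lambda>\<omega>. (X 0 \<omega>, \<lambda>j. W j \<omega>)))"
    by (rule nn_integral_distr[symmetric]) (use assms in simp_all)
  also have "\<dots> = (\<integral>\<^sup>+t. H t \<partial>(distr M borel (X 0) \<Otimes>\<^sub>M PiM UNIV (\<lambda>_. Wm)))"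
    by (simp add: noise_iid)
  also have "\<dots> = (\<integral>\<^sup>+x0. \<integral>\<^sup>+w. H (x0, w) \<partial>PiM UNIV (\<lambda>_. Wm) \<partial>distr M borel (X 0))"
    by (rule P.nn_integral_fst[symmetric])
      (use assms measurable_cong_sets[OF sets_eq refl] in blast)
  finally show ?thesis .
qed

lemma nn_integral_inputs_noise:
  fixes G :: "('x \<times> (nat \<Rightarrow> 'w)) \<times> 'w \<Rightarrow> ennreal"
  assumes [measurable]: "G \<in> borel_measurable ((borel \<Otimes>\<^sub>M PiM {..<k} (\<lambda>_. Wm)) \<Otimes>\<^sub>M Wm)"
  shows "(\<integral>\<^sup>+\<omega>. G (inputs k \<omega>, W k \<omega>) \<partial>M) = (\<integral>\<^sup>+\<omega>. \<integral>\<^sup>+y. G (inputs k \<omega>, y) \<partial>Wm \<partial>M)"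
proof -
  define K where "K = (\<lambda>z. \<integral>\<^sup>+y. G (z, y) \<partial>Wm)"
  have [measurable]: "K \<in> borel_measurable (borel \<Otimes>\<^sub>M PiM {..<k} (\<lambda>_. Wm))"
    unfolding K_def by measurable
  have "(\<integral>\<^sup>+\<omega>. G (inputs k \<omega>, W k \<omega>) \<partial>M) =
      (\<integral>\<^sup>+x0. \<integral>\<^sup>+w. G ((x0, restrict w {..<k}), w k) \<partial>PiM UNIV (\<lambda>_. Wm) \<partial>distr M borel (X 0))"
    using nn_integral_initial_noise[of "\<lambda>t. G ((fst t, restrict (snd t) {..<k}), snd t k)"]
    by (simp add: inputs_def)
  also have "\<dots> = (\<integral>\<^sup>+x0. \<integral>\<^sup>+w. K (x0, restrict w {..<k}) \<partial>PiM UNIV (\<lambda>_. Wm) \<partial>distr M borel (X 0))"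
  proof (rule nn_integral_cong)
    fix x0 :: 'x
    have "(\<integral>\<^sup>+w. G ((x0, restrict w {..<k}), w k) \<partial>PiM UNIV (\<lambda>_. Wm)) =
        (\<integral>\<^sup>+v. \<integral>\<^sup>+y. G ((x0, v), y) \<partial>Wm \<partial>PiM {..<k} (\<lambda>_. Wm))"
      by (rule Wm.nn_integral_PiM_prefix_component[where H = "\<lambda>v y. G ((x0, v), y)"]) simp
    also have "\<dots> = (\<integral>\<^sup>+w. K (x0, restrict w {..<k}) \<partial>PiM UNIV (\<lambda>_. Wm))"
      using Wm.nn_integral_PiM_restrict[where K = "\<lambda>v. K (x0, v)" and J = "{..<k}"]
      by (simp add: K_def)
    finally show "(\<integral>\<^sup>+w. G ((x0, restrict w {..<k}), w k) \<partial>PiM UNIV (\<lambda>_. Wm)) =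
        (\<integral>\<^sup>+w. K (x0, restrict w {..<k}) \<partial>PiM UNIV (\<lambda>_. Wm))" .
  qed
  also have "\<dots> = (\<integral>\<^sup>+\<omega>. \<integral>\<^sup>+y. G (inputs k \<omega>, y) \<partial>Wm \<partial>M)"
    using nn_integral_initial_noise[of "\<lambda>t. K (fst t, restrict (snd t) {..<k})"]
    by (simp add: K_def inputs_def)
  finally show ?thesis .
qed

lemma measurable_q:
  assumes "th \<in> Theta" and "a \<in> borel_measurable N" "b \<in> N \<rightarrow>\<^sub>M Um" "c \<in> borel_measurable N"
  shows "(\<lambda>z. q th (a z) (b z) (c z)) \<in> borel_measurable N"
proof -
  have "(\<lambda>z. (a z, b z, c z)) \<in> N \<rightarrow>\<^sub>M borel \<Otimes>\<^sub>M Um \<Otimes>\<^sub>M borel"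
    using assms by (intro measurable_Pair) auto
  from measurable_comp[OF this q_meas[OF assms(1)]] show ?thesis by (simp add: comp_def)
qed

lemma nn_integral_transition:
  assumes th: "th \<in> Theta" and u: "u \<in> space Um" and [measurable]: "G \<in> borel_measurable borel"
  shows "(\<integral>\<^sup>+w. G (f x u w th) \<partial>Wm) = (\<integral>\<^sup>+x'. ennreal (q th x u x') * G x' \<partial>lborel)"
proof -
  have "(\<lambda>w. (x, u, w)) \<in> Wm \<rightarrow>\<^sub>M borel \<Otimes>\<^sub>M Um \<Otimes>\<^sub>M Wm"
    using u by (intro measurable_Pair) auto
  from measurable_comp[OF this f_meas[OF th]]
  have [measurable]: "(\<lambda>w. f x u w th) \<in> Wm \<rightarrow>\<^sub>M borel" by (simp add: comp_def)
  have [measurable]: "(\<lambda>x'. ennreal (q th x u x')) \<in> borel_measurable lborel"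
    using measurable_q[OF th, of "\<lambda>_. x" lborel "\<lambda>_. u" "\<lambda>x'. x'"] u by simp
  have "(\<integral>\<^sup>+w. G (f x u w th) \<partial>Wm) = (\<integral>\<^sup>+x'. G x' \<partial>distr Wm borel (\<lambda>w. f x u w th))"
    by (rule nn_integral_distr[symmetric]) simp_all
  also have "\<dots> = (\<integral>\<^sup>+x'. ennreal (q th x u x') * G x' \<partial>lborel)"
    by (simp add: q_density[OF th] nn_integral_density)
  finally show ?thesis .
qed

lemma nn_integral_q_eq_1:
  assumes "th \<in> Theta" "u \<in> space Um"
  shows "(\<integral>\<^sup>+x'. ennreal (q th x u x') \<partial>lborel) = 1"
  using nn_integral_transition[OF assms, of "\<lambda>_. 1" x] Wm.emeasure_space_1 by simp

lemma nn_integral_next_state: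
  fixes G :: "('x \<times> (nat \<Rightarrow> 'w)) \<times> 'x \<Rightarrow> ennreal"
  assumes [measurable]: "G \<in> borel_measurable ((borel \<Otimes>\<^sub>M PiM {..<k} (\<lambda>_. Wm)) \<Otimes>\<^sub>M borel)"
  shows "(\<integral>\<^sup>+\<omega>. G (inputs k \<omega>, X (Suc k) \<omega>) \<partial>M) =
    (\<integral>\<^sup>+\<omega>. \<integral>\<^sup>+x'. ennreal (q thstar (X k \<omega>) (U k \<omega>) x') * G (inputs k \<omega>, x') \<partial>lborel \<partial>M)"
proof -
  have "(\<lambda>(z, y). (state_at k z, control_at k z, y))
      \<in> (borel \<Otimes>\<^sub>M PiM {..<k} (\<lambda>_. Wm)) \<Otimes>\<^sub>M Wm \<rightarrow>\<^sub>M borel \<Otimes>\<^sub>M Um \<Otimes>\<^sub>M Wm"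
    by measurable
  from measurable_comp[OF this f_true_meas]
  have [measurable]: "(\<lambda>(z, y). f_true (state_at k z) (control_at k z) y)
      \<in> borel_measurable ((borel \<Otimes>\<^sub>M PiM {..<k} (\<lambda>_. Wm)) \<Otimes>\<^sub>M Wm)"
    by (simp add: comp_def case_prod_beta)
  have G': "(\<lambda>(z, y). G (z, f_true (state_at k z) (control_at k z) y))
      \<in> borel_measurable ((borel \<Otimes>\<^sub>M PiM {..<k} (\<lambda>_. Wm)) \<Otimes>\<^sub>M Wm)"
    by measurable
  have "(\<integral>\<^sup>+\<omega>. G (inputs k \<omega>, X (Suc k) \<omega>) \<partial>M) =
      (\<integral>\<^sup>+\<omega>. G (inputs k \<omega>,
        f_true (state_at k (inputs k \<omega>)) (control_at k (inputs k \<omega>)) (W k \<omega>)) \<partial>M)"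
    using X_Suc X_eq_state_at[of k k] U_eq_control_at[of k k] by simp
  also have "\<dots> = (\<integral>\<^sup>+\<omega>. \<integral>\<^sup>+y. G (inputs k \<omega>, f_true (X k \<omega>) (U k \<omega>) y) \<partial>Wm \<partial>M)"
    using nn_integral_inputs_noise[OF G'] X_eq_state_at[of k k] U_eq_control_at[of k k] by simp
  also have "\<dots> = (\<integral>\<^sup>+\<omega>. \<integral>\<^sup>+x'. ennreal (q thstar (X k \<omega>) (U k \<omega>) x') * G (inputs k \<omega>, x') \<partial>lborel \<partial>M)"
  proof (rule nn_integral_cong)
    fix \<omega> assume \<omega>: "\<omega> \<in> space M"
    have "(\<lambda>x'. G (inputs k \<omega>, x')) \<in> borel_measurable borel"
      using measurable_space[OF measurable_inputs \<omega>] by measurable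
    then show "(\<integral>\<^sup>+y. G (inputs k \<omega>, f_true (X k \<omega>) (U k \<omega>) y) \<partial>Wm) =
        (\<integral>\<^sup>+x'. ennreal (q thstar (X k \<omega>) (U k \<omega>) x') * G (inputs k \<omega>, x') \<partial>lborel)"
      by (rule nn_integral_transition[OF thstar_in measurable_space[OF measurable_U \<omega>]])
  qed
  finally show ?thesis .
qed

abbreviation enum :: "nat \<Rightarrow> 'p" where
  "enum \<equiv> from_nat_into Theta"

lemma bij_enum: "bij_betw enum UNIV Theta"
  using bij_betw_from_nat_into[OF Theta_countable Theta_infinite] .

lemma enum_in: "enum n \<in> Theta"
  using bij_betw_apply[OF bij_enum] by blast

text \<open>The predictive density as a function of the inputs is an ennreal series along an
  enumeration of Theta: it is then measurable in (z, x') without any summability hypothesis,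
  and qhat is its real part.\<close>

definition post_at :: "nat \<Rightarrow> 'x \<times> (nat \<Rightarrow> 'w) \<Rightarrow> 'p \<Rightarrow> real" where
  "post_at k z = post (\<lambda>i. state_at i z) (\<lambda>i. control_at i z) k"

definition pred_at :: "nat \<Rightarrow> 'x \<times> (nat \<Rightarrow> 'w) \<Rightarrow> 'x \<Rightarrow> ennreal" where
  "pred_at k z x' =
     (\<Sum>n. ennreal (post_at k z (enum n) * q (enum n) (state_at k z) (control_at k z) x'))"

definition dens_at :: "nat \<Rightarrow> 'x \<times> (nat \<Rightarrow> 'w) \<Rightarrow> 'x \<Rightarrow> real" where
  "dens_at k z x' = q thstar (state_at k z) (control_at k z) x'"

lemma post_at_nonneg: "th \<in> Theta \<Longrightarrow> 0 \<le> post_at k z th"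
  unfolding post_at_def by (rule posterior_nonneg)

lemma posterior_eq_post_at: "post (\<lambda>i. X i \<omega>) (\<lambda>i. U i \<omega>) k = post_at k (inputs k \<omega>)"
  unfolding post_at_def by (rule posterior_cong) (auto intro: X_eq_state_at U_eq_control_at)

lemma dens_at_inputs: "dens_at k (inputs k \<omega>) = q thstar (X k \<omega>) (U k \<omega>)"
  using X_eq_state_at[of k k \<omega>] U_eq_control_at[of k k \<omega>] by (simp add: dens_at_def[abs_def])

lemma pred_at_inputs: "pred_at k (inputs k \<omega>) x' =
    (\<Sum>n. ennreal (post (\<lambda>i. X i \<omega>) (\<lambda>i. U i \<omega>) k (enum n) * q (enum n) (X k \<omega>) (U k \<omega>) x'))"
  using X_eq_state_at[of k k \<omega>] U_eq_control_at[of k k \<omega>]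
  by (simp add: pred_at_def posterior_eq_post_at)

lemma qhat_eq_enn2real_pred_at:
  "qhat Theta pi0 q (\<lambda>i. X i \<omega>) (\<lambda>i. U i \<omega>) (Suc k) (X k \<omega>) (U k \<omega>) x' =
    enn2real (pred_at k (inputs k \<omega>) x')"
  unfolding qhat_def pred_at_inputs
  by (simp add: infsum_eq_enn2real_suminf_reindex[OF bij_enum] posterior_nonneg q_pos less_imp_le)

lemma evidence_summable_iff:
  "evidence_summable (\<lambda>i. X i \<omega>) (\<lambda>i. U i \<omega>) k \<longleftrightarrow> pred_at k (inputs k \<omega>) (X (Suc k) \<omega>) \<noteq> \<top>"
  unfolding pred_at_inputs
  by (rule suminf_ennreal_reindex_neq_top_iff[OF bij_enum, symmetric])
    (simp add: posterior_nonneg q_pos less_imp_le)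

lemma measurable_post_at:
  "th \<in> Theta \<Longrightarrow> (\<lambda>z. post_at k z th) \<in> borel_measurable (borel \<Otimes>\<^sub>M PiM I (\<lambda>_. Wm))"
proof (induction k arbitrary: th)
  case 0
  then show ?case by (simp add: post_at_def)
next
  case (Suc k)
  let ?N = "borel \<Otimes>\<^sub>M PiM I (\<lambda>_. Wm)"
  have q: "(\<lambda>z. q th (state_at k z) (control_at k z) (state_at (Suc k) z)) \<in> borel_measurable ?N"
    if "th \<in> Theta" for th
    using that by (rule measurable_q) auto
  have "(\<lambda>z. evidence (\<lambda>i. state_at i z) (\<lambda>i. control_at i z) k) =
      (\<lambda>z. enn2real (\<Sum>n. ennreal (post_at k z (enum n) *
        q (enum n) (state_at k z) (control_at k z) (state_at (Suc k) z))))"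
    unfolding qhat_def post_at_def
    by (simp add: infsum_eq_enn2real_suminf_reindex[OF bij_enum] posterior_nonneg q_pos less_imp_le)
  also have "\<dots> \<in> borel_measurable ?N"
    using q Suc.IH enum_in by measurable
  finally have "(\<lambda>z. evidence (\<lambda>i. state_at i z) (\<lambda>i. control_at i z) k) \<in> borel_measurable ?N" .
  then show ?case
    using q[OF Suc.prems] Suc.IH[OF Suc.prems] by (simp add: post_at_def posterior_Suc)
qed

lemma measurable_pred_at[measurable]:
  "(\<lambda>(z, x'). pred_at k z x') \<in> borel_measurable ((borel \<Otimes>\<^sub>M PiM I (\<lambda>_. Wm)) \<Otimes>\<^sub>M borel)"
proof -
  let ?N = "(borel \<Otimes>\<^sub>M PiM I (\<lambda>_. Wm)) \<Otimes>\<^sub>M borel"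
  have "(\<lambda>p. q (enum n) (state_at k (fst p)) (control_at k (fst p)) (snd p)) \<in> borel_measurable ?N"
    for n by (rule measurable_q[OF enum_in]) auto
  moreover have "(\<lambda>p. post_at k (fst p) (enum n)) \<in> borel_measurable ?N" for n
    using measurable_comp[OF measurable_fst measurable_post_at[OF enum_in]] by (simp add: comp_def)
  ultimately have "(\<lambda>p. pred_at k (fst p) (snd p)) \<in> borel_measurable ?N"
    unfolding pred_at_def by measurable
  then show ?thesis by (simp add: case_prod_beta)
qed

lemma measurable_dens_at[measurable]:
  "(\<lambda>(z, x'). dens_at k z x') \<in> borel_measurable ((borel \<Otimes>\<^sub>M PiM I (\<lambda>_. Wm)) \<Otimes>\<^sub>M borel)"
proof -
  have "(\<lambda>p. dens_at k (fst p) (snd p)) \<in> borel_measurable ((borel \<Otimes>\<^sub>M PiM I (\<lambda>_. Wm)) \<Otimes>\<^sub>M borel)"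
    unfolding dens_at_def by (rule measurable_q[OF thstar_in]) auto
  then show ?thesis by (simp add: case_prod_beta)
qed

lemma nn_integral_pred_at:
  assumes z: "z \<in> space (borel \<Otimes>\<^sub>M PiM I (\<lambda>_. Wm))" and has_sum: "(post_at k z has_sum s) Theta"
  shows "(\<integral>\<^sup>+x'. pred_at k z x' \<partial>lborel) = ennreal s"
proof -
  have u: "control_at k z \<in> space Um" using measurable_space[OF measurable_control_at z] .
  have q: "(\<lambda>x'. ennreal (q (enum n) (state_at k z) (control_at k z) x'))
      \<in> borel_measurable lborel" for n
    using measurable_q[OF enum_in, of "\<lambda>_. state_at k z" lborel "\<lambda>_. control_at k z" "\<lambda>x'. x'"] u
    by simp
  have "(\<integral>\<^sup>+x'. pred_at k z x' \<partial>lborel) =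
      (\<Sum>n. \<integral>\<^sup>+x'. ennreal (post_at k z (enum n)) *
        ennreal (q (enum n) (state_at k z) (control_at k z) x') \<partial>lborel)"
    unfolding pred_at_def using q
    by (subst nn_integral_suminf[symmetric])
      (auto simp: ennreal_mult post_at_nonneg enum_in q_pos less_imp_le)
  also have "\<dots> = (\<Sum>n. ennreal (post_at k z (enum n)))"
    using q by (simp add: nn_integral_cmult nn_integral_q_eq_1[OF enum_in u])
  also have "\<dots> = ennreal s"
    by (rule suminf_ennreal_reindex_eq[OF bij_enum _ has_sum]) (simp add: post_at_nonneg)
  finally show ?thesis .
qed

lemma nn_integral_pred_at_le_1:
  assumes "z \<in> space (borel \<Otimes>\<^sub>M PiM I (\<lambda>_. Wm))"
  shows "(\<integral>\<^sup>+x'. pred_at k z x' \<partial>lborel) \<le> 1"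
proof -
  have "(post_at k z has_sum 1) Theta \<or> (post_at k z has_sum 0) Theta"
    using posterior_has_sum_1_or_0 has_sum_0[of Theta "post_at k z"] unfolding post_at_def by blast
  then show ?thesis using nn_integral_pred_at[OF assms] by auto
qed

text \<open>At x' = x_{k+1}, gap_at and ratio_at are kl_gap r_k and 1 / r_k for the likelihood ratio
  r_k = q(x_{k+1}; thstar, x_k, u_k) / qhat_{k+1}(x_{k+1}; x_k, u_k); kl_at is the KL divergence d_k,
  the conditional expectation of kl_gap r_k given the inputs.\<close>

definition gap_at :: "nat \<Rightarrow> 'x \<times> (nat \<Rightarrow> 'w) \<Rightarrow> 'x \<Rightarrow> ennreal" where
  "gap_at k z x' = ennreal (kl_gap (dens_at k z x' / enn2real (pred_at k z x')))"

definition ratio_at :: "nat \<Rightarrow> 'x \<times> (nat \<Rightarrow> 'w) \<Rightarrow> 'x \<Rightarrow> ennreal" where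
  "ratio_at k z x' = pred_at k z x' / ennreal (dens_at k z x')"

definition kl_at :: "nat \<Rightarrow> 'x \<times> (nat \<Rightarrow> 'w) \<Rightarrow> ennreal" where
  "kl_at k z = (\<integral>\<^sup>+x'. ennreal (dens_at k z x') * gap_at k z x' \<partial>lborel)"

definition kl_step :: "nat \<Rightarrow> 'o \<Rightarrow> real" where
  "kl_step j \<omega> = DKL (density lborel (q thstar (X j \<omega>) (U j \<omega>)))
     (density lborel (qhat Theta pi0 q (\<lambda>i. X i \<omega>) (\<lambda>i. U i \<omega>) (Suc j) (X j \<omega>) (U j \<omega>)))"

lemma measurable_gap_at[measurable]:
  "(\<lambda>(z, x'). gap_at k z x') \<in> borel_measurable ((borel \<Otimes>\<^sub>M PiM I (\<lambda>_. Wm)) \<Otimes>\<^sub>M borel)"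
  unfolding gap_at_def by measurable

lemma measurable_ratio_at[measurable]:
  "(\<lambda>(z, x'). ratio_at k z x') \<in> borel_measurable ((borel \<Otimes>\<^sub>M PiM I (\<lambda>_. Wm)) \<Otimes>\<^sub>M borel)"
  unfolding ratio_at_def by measurable

lemma measurable_kl_at[measurable]: "kl_at k \<in> borel_measurable (borel \<Otimes>\<^sub>M PiM I (\<lambda>_. Wm))"
  unfolding kl_at_def by measurable

lemma dens_at_pos: "0 < dens_at k z x'"
  unfolding dens_at_def using q_pos[OF thstar_in] .

lemma dens_at_mult_ratio_at: "ennreal (dens_at k z x') * ratio_at k z x' = pred_at k z x'"
proof -
  have "ennreal (dens_at k z x') * ratio_at k z x' =
      pred_at k z x' * ennreal (dens_at k z x') / ennreal (dens_at k z x')"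
    by (simp add: ratio_at_def ennreal_times_divide mult.commute)
  also have "\<dots> = pred_at k z x'"
    using dens_at_pos[of k z x'] by (intro ennreal_mult_divide_eq) auto
  finally show ?thesis .
qed

lemma nn_integral_gap_at_next:
  "(\<integral>\<^sup>+\<omega>. gap_at k (inputs k \<omega>) (X (Suc k) \<omega>) \<partial>M) = (\<integral>\<^sup>+\<omega>. kl_at k (inputs k \<omega>) \<partial>M)"
  using nn_integral_next_state[of "\<lambda>(z, x'). gap_at k z x'" k]
  by (simp add: kl_at_def dens_at_inputs)

lemma nn_integral_ratio_at_next_le_1:
  "(\<integral>\<^sup>+\<omega>. ratio_at k (inputs k \<omega>) (X (Suc k) \<omega>) \<partial>M) \<le> 1"
proof -
  have "(\<integral>\<^sup>+\<omega>. ratio_at k (inputs k \<omega>) (X (Suc k) \<omega>) \<partial>M) =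
      (\<integral>\<^sup>+\<omega>. \<integral>\<^sup>+x'. ennreal (dens_at k (inputs k \<omega>) x') * ratio_at k (inputs k \<omega>) x' \<partial>lborel \<partial>M)"
    using nn_integral_next_state[of "\<lambda>(z, x'). ratio_at k z x'" k] by (simp add: dens_at_inputs)
  also have "\<dots> = (\<integral>\<^sup>+\<omega>. \<integral>\<^sup>+x'. pred_at k (inputs k \<omega>) x' \<partial>lborel \<partial>M)"
    by (simp add: dens_at_mult_ratio_at)
  also have "\<dots> \<le> (\<integral>\<^sup>+\<omega>. 1 \<partial>M)"
    by (intro nn_integral_mono nn_integral_pred_at_le_1[OF measurable_space[OF measurable_inputs]])
  finally show ?thesis by (simp add: M.emeasure_space_1)
qed

text \<open>Since the ratio has finite expectation, the predictive series converges at the observed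
  next state almost surely.\<close>

lemma AE_evidence_summable: "AE \<omega> in M. \<forall>k. evidence_summable (\<lambda>i. X i \<omega>) (\<lambda>i. U i \<omega>) k"
proof (subst AE_all_countable, intro allI)
  fix k
  have "AE \<omega> in M. ratio_at k (inputs k \<omega>) (X (Suc k) \<omega>) \<noteq> \<top>"
    using nn_integral_ratio_at_next_le_1[of k]
    by (intro nn_integral_enn2real_of_finite(1)) (auto simp: top_unique)
  then show "AE \<omega> in M. evidence_summable (\<lambda>i. X i \<omega>) (\<lambda>i. U i \<omega>) k"
    by eventually_elim (auto simp: evidence_summable_iff ratio_at_def ennreal_divide_eq_top_iff)
qed

lemma pred_at_ge: "ennreal (post_at k z thstar * dens_at k z x') \<le> pred_at k z x'"
proof -
  obtain n where "enum n = thstar" using bij_betw_imp_surj_on[OF bij_enum] thstar_in by force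
  then have "ennreal (post_at k z thstar * dens_at k z x') =
      (\<Sum>i\<in>{n}. ennreal (post_at k z (enum i) * q (enum i) (state_at k z) (control_at k z) x'))"
    by (simp add: dens_at_def)
  also have "\<dots> \<le> pred_at k z x'" unfolding pred_at_def by (rule sum_le_suminf) auto
  finally show ?thesis .
qed

text \<open>The hypothesis pi_k(thstar) > 0 bounds the predictive density below by a multiple of the
  true one, which is what makes the KL divergence integrable.\<close>

lemma DKL_dens_at_pred_at:
  assumes z: "z \<in> space (borel \<Otimes>\<^sub>M PiM I (\<lambda>_. Wm))"
    and post: "(post_at k z has_sum 1) Theta" "0 < post_at k z thstar"
  defines "s \<equiv> \<lambda>x'. enn2real (pred_at k z x')"
  shows "ennreal (DKL (density lborel (dens_at k z)) (density lborel s)) = kl_at k z"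
    and "0 \<le> DKL (density lborel (dens_at k z)) (density lborel s)"
proof -
  have u: "control_at k z \<in> space Um" using measurable_space[OF measurable_control_at z] .
  have p_meas: "dens_at k z \<in> borel_measurable lborel"
    using measurable_Pair2[OF measurable_dens_at z] by simp
  have nn_int_p: "(\<integral>\<^sup>+x'. ennreal (dens_at k z x') \<partial>lborel) = 1"
    unfolding dens_at_def by (rule nn_integral_q_eq_1[OF thstar_in u])
  have pred_meas: "pred_at k z \<in> borel_measurable lborel"
    using measurable_Pair2[OF measurable_pred_at z] by simp
  then have s_meas: "s \<in> borel_measurable lborel" unfolding s_def by measurable
  note pred_finite = nn_integral_enn2real_of_finite[OF pred_meas,
      unfolded nn_integral_pred_at[OF z post(1)], simplified]
  have nn_int_s: "(\<integral>\<^sup>+x'. ennreal (s x') \<partial>lborel) = 1"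
    using pred_finite(2) by (simp add: s_def)
  have s_ge: "AE x' in lborel. post_at k z thstar * dens_at k z x' \<le> s x'"
    using pred_finite(1)
  proof eventually_elim
    case (elim x')
    then show ?case
      using enn2real_mono[OF pred_at_ge[of k z x']] post(2) dens_at_pos[of k z x']
      by (simp add: s_def top.not_eq_extremum)
  qed
  note KL = lborel.DKL_density_eq_nn_integral_kl_gap[OF p_meas dens_at_pos nn_int_p s_meas nn_int_s
      post(2) s_ge]
  then show "0 \<le> DKL (density lborel (dens_at k z)) (density lborel s)" by simp
  have "kl_at k z = (\<integral>\<^sup>+x'. ennreal (dens_at k z x' * kl_gap (dens_at k z x' / s x')) \<partial>lborel)"
    using dens_at_pos by (simp add: kl_at_def gap_at_def s_def ennreal_mult' less_imp_le)
  with KL show "ennreal (DKL (density lborel (dens_at k z)) (density lborel s)) = kl_at k z"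
    by simp
qed

lemma kl_step_eq_kl_at:
  assumes summable: "\<forall>k. evidence_summable (\<lambda>i. X i \<omega>) (\<lambda>i. U i \<omega>) k" and \<omega>: "\<omega> \<in> space M"
  shows "ennreal (kl_step k \<omega>) = kl_at k (inputs k \<omega>)" and "0 \<le> kl_step k \<omega>"
proof -
  have "(post_at k (inputs k \<omega>) has_sum 1) Theta" "0 < post_at k (inputs k \<omega>) thstar"
    using posterior_has_sum_1 posterior_thstar_pos summable
    unfolding posterior_eq_post_at[symmetric] by auto
  note KL = DKL_dens_at_pred_at[OF measurable_space[OF measurable_inputs \<omega>] this]
  have "kl_step k \<omega> = DKL (density lborel (dens_at k (inputs k \<omega>)))
      (density lborel (\<lambda>x'. enn2real (pred_at k (inputs k \<omega>) x')))"
    by (simp add: kl_step_def dens_at_inputs qhat_eq_enn2real_pred_at)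
  with KL show "ennreal (kl_step k \<omega>) = kl_at k (inputs k \<omega>)" and "0 \<le> kl_step k \<omega>"
    by simp_all
qed

lemma sum_gap_at_le:
  assumes summable: "\<forall>k. evidence_summable (\<lambda>i. X i \<omega>) (\<lambda>i. U i \<omega>) k"
  shows "(\<Sum>k<n. gap_at k (inputs k \<omega>) (X (Suc k) \<omega>)) + of_nat n
    \<le> ennreal (- ln (pi0 thstar)) + (\<Sum>k<n. ratio_at k (inputs k \<omega>) (X (Suc k) \<omega>))"
proof -
  define xs where "xs = (\<lambda>i. X i \<omega>)"
  define us where "us = (\<lambda>i. U i \<omega>)"
  define qs where "qs k = q thstar (X k \<omega>) (U k \<omega>) (X (Suc k) \<omega>)" for k
  have summable': "\<forall>j<k. evidence_summable xs us j" for k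
    using summable by (simp add: xs_def us_def)
  have qs_pos: "0 < qs k" for k unfolding qs_def using q_pos[OF thstar_in] .
  have Z_pos: "0 < evidence xs us k" for k
    using evidence_pos summable'[of "Suc k"] posterior_thstar_pos[OF summable'] by blast
  have pred: "pred_at k (inputs k \<omega>) (X (Suc k) \<omega>) = ennreal (evidence xs us k)" for k
    using evidence_summable_iff[of \<omega> k] summable qhat_eq_enn2real_pred_at[of \<omega> k "X (Suc k) \<omega>"]
    by (simp add: xs_def us_def ennreal_enn2real_if)
  have gap: "gap_at k (inputs k \<omega>) (X (Suc k) \<omega>) = ennreal (kl_gap (qs k / evidence xs us k))" for k
    using Z_pos[of k] by (simp add: gap_at_def dens_at_inputs pred qs_def xs_def us_def)
  have ratio: "ratio_at k (inputs k \<omega>) (X (Suc k) \<omega>) = ennreal (evidence xs us k / qs k)" for k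
    using Z_pos[of k] qs_pos[of k]
    by (simp add: ratio_at_def dens_at_inputs pred qs_def divide_ennreal less_imp_le)
  have "0 \<le> - ln (pi0 thstar)"
    using posterior_thstar_le_1[of 0] prior_thstar_pos by simp
  moreover have "0 \<le> kl_gap (qs k / evidence xs us k)" "0 \<le> evidence xs us k / qs k" for k
    using qs_pos[of k] Z_pos[of k] by (simp_all add: kl_gap_nonneg less_imp_le)
  moreover have "(\<Sum>k<n. kl_gap (qs k / evidence xs us k)) + n
      \<le> - ln (pi0 thstar) + (\<Sum>k<n. evidence xs us k / qs k)"
    using sum_kl_gap_le[OF summable'] by (simp add: qs_def xs_def us_def)
  ultimately show ?thesis
    unfolding gap ratio
    by (simp add: sum_ennreal ennreal_of_nat_eq_real_of_nat sum_nonneg flip: ennreal_plus)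
      (metis (no_types, lifting) ennreal_leI)
qed

lemma sum_nn_integral_kl_at_le:
  "(\<Sum>k<n. \<integral>\<^sup>+\<omega>. kl_at k (inputs k \<omega>) \<partial>M) \<le> ennreal (- ln (pi0 thstar))"
proof -
  have "(\<Sum>k<n. \<integral>\<^sup>+\<omega>. kl_at k (inputs k \<omega>) \<partial>M) + of_nat n =
      (\<integral>\<^sup>+\<omega>. (\<Sum>k<n. gap_at k (inputs k \<omega>) (X (Suc k) \<omega>)) + of_nat n \<partial>M)"
    by (simp add: nn_integral_add nn_integral_sum nn_integral_gap_at_next M.emeasure_space_1)
  also have "\<dots> \<le> (\<integral>\<^sup>+\<omega>. ennreal (- ln (pi0 thstar)) +
      (\<Sum>k<n. ratio_at k (inputs k \<omega>) (X (Suc k) \<omega>)) \<partial>M)"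
    using AE_evidence_summable by (rule nn_integral_mono_AE[OF AE_mp]) (auto intro: sum_gap_at_le)
  also have "\<dots> = ennreal (- ln (pi0 thstar)) +
      (\<Sum>k<n. \<integral>\<^sup>+\<omega>. ratio_at k (inputs k \<omega>) (X (Suc k) \<omega>) \<partial>M)"
    by (simp add: nn_integral_add nn_integral_sum M.emeasure_space_1)
  also have "\<dots> \<le> ennreal (- ln (pi0 thstar)) + (\<Sum>k<n. 1)"
    by (intro add_left_mono sum_mono nn_integral_ratio_at_next_le_1)
  finally show ?thesis by (simp add: add.commute ennreal_add_left_cancel_le)
qed

lemma AE_kl_step_eq_kl_at:
  "AE \<omega> in M. \<forall>j. ennreal (kl_step j \<omega>) = kl_at j (inputs j \<omega>) \<and> 0 \<le> kl_step j \<omega>"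
  using AE_evidence_summable by (rule AE_mp) (auto intro!: AE_I2 kl_step_eq_kl_at)

lemma nn_integral_kl_step_eq: "(\<integral>\<^sup>+\<omega>. ennreal (kl_step j \<omega>) \<partial>M) = (\<integral>\<^sup>+\<omega>. kl_at j (inputs j \<omega>) \<partial>M)"
  using AE_kl_step_eq_kl_at by (intro nn_integral_cong_AE) auto

lemma nn_integral_suminf_kl_at:
  "(\<integral>\<^sup>+\<omega>. (\<Sum>j. kl_at j (inputs j \<omega>)) \<partial>M) = (\<Sum>j. \<integral>\<^sup>+\<omega>. ennreal (kl_step j \<omega>) \<partial>M)"
  by (subst nn_integral_suminf) (measurable, simp add: nn_integral_kl_step_eq)

lemma nn_integral_suminf_kl_step:
  "(\<integral>\<^sup>+\<omega>. (\<Sum>j. ennreal (kl_step j \<omega>)) \<partial>M) = (\<Sum>j. \<integral>\<^sup>+\<omega>. ennreal (kl_step j \<omega>) \<partial>M)"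
  unfolding nn_integral_suminf_kl_at[symmetric]
  using AE_kl_step_eq_kl_at by (intro nn_integral_cong_AE) auto

lemma suminf_nn_integral_kl_step_le:
  "(\<Sum>j. \<integral>\<^sup>+\<omega>. ennreal (kl_step j \<omega>) \<partial>M) \<le> ennreal (- ln (pi0 thstar))"
  unfolding nn_integral_kl_step_eq suminf_eq_SUP by (intro SUP_least sum_nn_integral_kl_at_le)

lemma AE_kl_step_tendsto_0: "AE \<omega> in M. (\<lambda>j. kl_step j \<omega>) \<longlonglongrightarrow> 0"
proof -
  have "(\<integral>\<^sup>+\<omega>. (\<Sum>j. kl_at j (inputs j \<omega>)) \<partial>M) \<noteq> \<top>"
    using suminf_nn_integral_kl_step_le by (auto simp: nn_integral_suminf_kl_at top_unique)
  then have "AE \<omega> in M. (\<Sum>j. kl_at j (inputs j \<omega>)) \<noteq> \<top>"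
    by (intro nn_integral_enn2real_of_finite(1)) measurable
  with AE_kl_step_eq_kl_at show ?thesis
  proof eventually_elim
    case (elim \<omega>)
    then have "summable (\<lambda>j. kl_step j \<omega>)" by (intro summable_suminf_not_top) auto
    then show ?case by (rule summable_LIMSEQ_zero)
  qed
qed

end

theorem mainTheorem6:
  fixes M :: "'o measure"
    and Um :: "'u measure" and Wm :: "'w::euclidean_space measure" and pw :: "'w \<Rightarrow> ennreal"
    and f :: "'x::euclidean_space \<Rightarrow> 'u \<Rightarrow> 'w \<Rightarrow> 'p \<Rightarrow> 'x"
    and q :: "'p \<Rightarrow> 'x \<Rightarrow> 'u \<Rightarrow> 'x \<Rightarrow> real"
    and Dq :: "'p \<Rightarrow> 'x \<Rightarrow> 'u \<Rightarrow> 'x \<Rightarrow> 'x \<Rightarrow>\<^sub>L real"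
    and Theta :: "'p set" and thstar :: 'p and pi0 :: "'p \<Rightarrow> real"
    and X :: "nat \<Rightarrow> 'o \<Rightarrow> 'x" and U :: "nat \<Rightarrow> 'o \<Rightarrow> 'u" and W :: "nat \<Rightarrow> 'o \<Rightarrow> 'w"
    and mu :: "nat \<Rightarrow> (nat \<Rightarrow> 'x) \<times> (nat \<Rightarrow> 'u) \<Rightarrow> 'u"
  assumes M: "prob_space M"
    \<comment> \<open>countably infinite parameter set, true parameter, prior\<close>
    and Theta: "countable Theta" "infinite Theta" "thstar \<in> Theta"
    and prior: "\<forall>th\<in>Theta. pi0 th \<ge> 0" "(pi0 has_sum 1) Theta"
    and prior_pos: "pi0 thstar > 0"
    \<comment> \<open>system map and noise\<close>
    and f_meas: "\<forall>th\<in>Theta. (\<lambda>(x, u, w). f x u w th) \<in> borel \<Otimes>\<^sub>M Um \<Otimes>\<^sub>M Wm \<rightarrow>\<^sub>M borel"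
    and W_rv: "\<forall>k. W k \<in> M \<rightarrow>\<^sub>M Wm"
    and noise_density: "Wm = density lborel pw" "prob_space Wm"
    and X0_rv: "X 0 \<in> borel_measurable M"
    \<comment> \<open>w_0, w_1, ... i.i.d. with law Wm and jointly independent of x_0\<close>
    and iid_indep: "distr M (borel \<Otimes>\<^sub>M PiM UNIV (\<lambda>_. Wm)) (\<lambda>\<omega>. (X 0 \<omega>, \<lambda>k. W k \<omega>))
                     = distr M borel (X 0) \<Otimes>\<^sub>M PiM UNIV (\<lambda>_. Wm)"
    \<comment> \<open>transition density q(x'; th, x, u) of f(x, u, w, th)\<close>
    and q_density: "\<forall>th\<in>Theta. \<forall>x u. distr Wm borel (\<lambda>w. f x u w th) = density lborel (q th x u)"
    and q_meas: "\<forall>th\<in>Theta. (\<lambda>(x, u, x'). q th x u x') \<in> borel_measurable (borel \<Otimes>\<^sub>M Um \<Otimes>\<^sub>M borel)"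
    and q_pos: "\<forall>th\<in>Theta. \<forall>x u x'. q th x u x' > 0"
    and q_C1: "\<forall>th\<in>Theta. \<forall>x u. (\<forall>y. (q th x u has_derivative blinfun_apply (Dq th x u y)) (at y))
                 \<and> continuous_on UNIV (Dq th x u) \<and> (\<exists>B. \<forall>y. norm (Dq th x u y) \<le> B)"
    \<comment> \<open>closed-loop dynamics with a causal measurable control policy\<close>
    and mu_meas: "\<forall>k. mu k \<in> (PiM {..k} (\<lambda>_. borel)) \<Otimes>\<^sub>M (PiM {..<k} (\<lambda>_. Um)) \<rightarrow>\<^sub>M Um"
    and U_def: "\<forall>k \<omega>. U k \<omega> = mu k (restrict (\<lambda>i. X i \<omega>) {..k}, restrict (\<lambda>i. U i \<omega>) {..<k})"
    and X_dyn: "\<forall>k \<omega>. X (Suc k) \<omega> = f (X k \<omega>) (U k \<omega>) (W k \<omega>) thstar"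
  defines "d \<equiv> (\<lambda>j \<omega>. DKL (density lborel (q thstar (X j \<omega>) (U j \<omega>)))
       (density lborel (qhat Theta pi0 q (\<lambda>i. X i \<omega>) (\<lambda>i. U i \<omega>) (Suc j) (X j \<omega>) (U j \<omega>))))"
  shows "(\<integral>\<^sup>+\<omega>. (\<Sum>j. ennreal (d j \<omega>)) \<partial>M) = (\<Sum>j. \<integral>\<^sup>+\<omega>. ennreal (d j \<omega>) \<partial>M)
       \<and> (\<Sum>j. \<integral>\<^sup>+\<omega>. ennreal (d j \<omega>) \<partial>M) \<le> ennreal (- ln (pi0 thstar))
       \<and> ennreal (- ln (pi0 thstar)) < \<infinity>
       \<and> (AE \<omega> in M. (\<lambda>j. d j \<omega>) \<longlonglongrightarrow> 0)"
proof -
  interpret closed_loop_bayes Theta pi0 q thstar M Um Wm f X U W mu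
  proof (intro closed_loop_bayes.intro posterior_setting.intro closed_loop_bayes_axioms.intro)
    show "space Wm = UNIV" using noise_density(1) by simp
  qed (fact M Theta prior prior_pos noise_density(2) X0_rv iid_indep prior(1)[rule_format]
      f_meas[rule_format] W_rv[rule_format] q_density[rule_format] q_meas[rule_format]
      q_pos[rule_format] mu_meas[rule_format] U_def[rule_format] X_dyn[rule_format])+
  have "d = kl_step" unfolding d_def kl_step_def ..
  then show ?thesis
    using nn_integral_suminf_kl_step suminf_nn_integral_kl_step_le AE_kl_step_tendsto_0 by simp
qed

end
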